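(* Let $0<\delta<1$, $0<\varepsilon<1/7$, $2<\alpha<\min(\frac{2}{1-\delta},3)$ and $0<\rho<\min\!\left(\frac{1-\delta}{2},\frac{2-\alpha(1-\delta)}{4}\right)$. Then for all sufficiently large $n$ the following holds. Let $G\sim G(n,p)$ with $p=n^{\delta-1}$, and let $H$ be a balanced graph on $m=n^{\rho}$ vertices with average degree $\alpha$. Then $\mathbb E[X_H(G)]\to+\infty$ as $n\to\infty$, and for every $\beta\in[0,1)$, \[\Pr\big[X_H(G)\le\beta\,\mathbb E[X_H(G)]\big]\le\frac{4\varepsilon}{(1-\beta)^2}.\]
   Context: A graph with average degree $\alpha$ is balanced if every induced subgraph has average degree at most $\alpha$. $G(n,p)$ is the Erdős–Rényi random graph on $[n]$. With $H$ on vertex set $[m]$ ($m$ assumed to divide $n$), partition $[n]$ into parts $P_i=\{(i-1)\frac nm+1,\dots,i\frac nm\}$. $X_H(G)$ is the number of sets $S=\{v_1,\dots,v_m\}$ with $v_i\in P_i$ such that $i\mapsto v_i$ is an isomorphism from $H$ onto the induced subgraph $G[S]$. *)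

theory Defs
  imports "HOL-Probability.Probability"
begin

text \<open>Simple graphs are represented by their edge sets: sets of 2-element sets of vertices.\<close>

definition all_edges :: "nat set \<Rightarrow> nat set set" where
  "all_edges V = {e. e \<subseteq> V \<and> card e = 2}"

definition is_graph_on :: "nat set \<Rightarrow> nat set set \<Rightarrow> bool" where
  "is_graph_on V E \<longleftrightarrow> E \<subseteq> all_edges V"

definition induced_edges :: "nat set set \<Rightarrow> nat set \<Rightarrow> nat set set" where
  "induced_edges E U = {e \<in> E. e \<subseteq> U}"

definition avg_degree :: "nat set \<Rightarrow> nat set set \<Rightarrow> real" where
  "avg_degree V E = 2 * real (card E) / real (card V)"

definition balanced :: "nat set \<Rightarrow> nat set set \<Rightarrow> bool" where
  "balanced V E \<longleftrightarrow>
     (\<forall>U. U \<subseteq> V \<longrightarrow> U \<noteq> {} \<longrightarrow> avg_degree U (induced_edges E U) \<le> avg_degree V E)"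

definition gnp :: "nat \<Rightarrow> real \<Rightarrow> nat set set pmf" where
  "gnp n p = map_pmf (\<lambda>f. {e \<in> all_edges {1..n}. f e})
                     (Pi_pmf (all_edges {1..n}) False (\<lambda>_. bernoulli_pmf p))"

definition part :: "nat \<Rightarrow> nat \<Rightarrow> nat \<Rightarrow> nat set" where
  "part n m i = {(i - 1) * (n div m) + 1 .. i * (n div m)}"

definition XH :: "nat \<Rightarrow> nat \<Rightarrow> nat set set \<Rightarrow> nat set set \<Rightarrow> nat" where
  "XH n m H G = card {S. \<exists>v \<in> Pi\<^sub>E {1..m} (part n m).
       S = v ` {1..m} \<and> inj_on v {1..m} \<and>
       (\<forall>i\<in>{1..m}. \<forall>j\<in>{1..m}. i \<noteq> j \<longrightarrow> ({i, j} \<in> H \<longleftrightarrow> {v i, v j} \<in> G))}"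

end

theory Submission
  imports Defs
begin

(* With s = n div m, X_H counts the s^m partite maps v (v i in part i) that embed H as an induced
   subgraph. A partite map is injective and remembers the part of each vertex, so v is a copy iff G
   agrees with the pattern of H on the pairs of v({1..m}); hence E X_H = s^m P with P the product of
   p or 1 - p over the pairs of {1..m}. Two maps agreeing on a set A share only the pairs inside v(A),
   and balancedness of H gives these pairs probability at least p^(alpha |A|/2) (1 - p)^(m^2). Summing
   over the overlaps gives E X_H^2 <= (1 - p)^(-m^2) (1 + 1/(s p^(alpha/2)))^m (E X_H)^2. In the range of
   the exponents both m^2 p and m/(s p^(alpha/2)) tend to 0, so this ratio is at most 1 + 4 eps and
   Chebyshev's inequality bounds the lower tail, while E X_H >= s p^(alpha/2)/2 tends to infinity. *)

lemma (in prob_space) prob_le_fraction_of_expectation: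
  fixes X :: "'a \<Rightarrow> real"
  assumes X: "random_variable borel X" "integrable M (\<lambda>x. X x ^ 2)"
    and mean_pos: "0 < expectation X"
    and moment: "expectation (\<lambda>x. X x ^ 2) \<le> R * (expectation X)\<^sup>2"
    and \<beta>: "0 \<le> \<beta>" "\<beta> < 1"
  shows "prob {x\<in>space M. X x \<le> \<beta> * expectation X} \<le> (R - 1) / (1 - \<beta>)\<^sup>2"
proof -
  let ?\<mu> = "expectation X"
  have gap_pos: "0 < (1 - \<beta>) * ?\<mu>" using \<beta> mean_pos by simp
  have "{x\<in>space M. X x \<le> \<beta> * ?\<mu>} \<subseteq> {x\<in>space M. (1 - \<beta>) * ?\<mu> \<le> \<bar>X x - ?\<mu>\<bar>}"
    by (auto simp: algebra_simps abs_if)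
  moreover have "{x\<in>space M. (1 - \<beta>) * ?\<mu> \<le> \<bar>X x - ?\<mu>\<bar>} \<in> events"
    using X(1) by measurable
  ultimately have "prob {x\<in>space M. X x \<le> \<beta> * ?\<mu>} \<le> prob {x\<in>space M. (1 - \<beta>) * ?\<mu> \<le> \<bar>X x - ?\<mu>\<bar>}"
    by (rule finite_measure_mono)
  also have "\<dots> \<le> variance X / ((1 - \<beta>) * ?\<mu>)\<^sup>2"
    by (rule Chebyshev_inequality[OF X gap_pos])
  also have "variance X = expectation (\<lambda>x. X x ^ 2) - ?\<mu>\<^sup>2"
    using X by (intro variance_eq) (auto intro: square_integrable_imp_integrable)
  also have "(expectation (\<lambda>x. X x ^ 2) - ?\<mu>\<^sup>2) / ((1 - \<beta>) * ?\<mu>)\<^sup>2 \<le> (R - 1) * ?\<mu>\<^sup>2 / ((1 - \<beta>) * ?\<mu>)\<^sup>2"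
    using moment by (intro divide_right_mono) (auto simp: algebra_simps)
  also have "\<dots> = (R - 1) / (1 - \<beta>)\<^sup>2"
    using mean_pos by (simp add: power_mult_distrib)
  finally show ?thesis .
qed

lemma measure_Pi_pmf_agree:
  assumes "finite I" "D \<subseteq> I"
  shows "measure_pmf.prob (Pi_pmf I dflt M) {f. \<forall>i\<in>D. f i = b i} = (\<Prod>i\<in>D. pmf (M i) (b i))"
proof -
  define B where "B i = (if i \<in> D then {b i} else UNIV)" for i
  have "{f. \<forall>i\<in>D. f i = b i} = Pi I B"
    using assms(2) by (auto simp: B_def Pi_def)
  then have "measure_pmf.prob (Pi_pmf I dflt M) {f. \<forall>i\<in>D. f i = b i}
      = (\<Prod>i\<in>I. measure_pmf.prob (M i) (B i))"
    using assms(1) by (simp add: measure_Pi_pmf_Pi)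
  also have "\<dots> = (\<Prod>i\<in>I. if i \<in> D then pmf (M i) (b i) else 1)"
    by (intro prod.cong) (auto simp: B_def measure_pmf_single)
  also have "\<dots> = (\<Prod>i\<in>D. pmf (M i) (b i))"
    using assms by (simp add: prod.If_cases Int_absorb1)
  finally show ?thesis .
qed

lemma prod_superset_le:
  fixes f :: "'a \<Rightarrow> 'b::linordered_idom"
  assumes "finite C" "B \<subseteq> C" "\<And>x. x \<in> C \<Longrightarrow> 0 \<le> f x \<and> f x \<le> 1"
  shows "prod f C \<le> prod f B"
proof -
  have "prod f C = prod f (C - B) * prod f B"
    by (rule prod.subset_diff[OF assms(2,1)])
  also have "\<dots> \<le> 1 * prod f B"
    using assms by (intro mult_right_mono prod_le_1 prod_nonneg) auto
  finally show ?thesis by simp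
qed

lemma sum_PiE_power_card_agree:
  fixes K :: "'c::comm_ring_1"
  assumes I: "finite I" and A: "\<And>i. i \<in> I \<Longrightarrow> finite (A i)" and v: "v \<in> Pi\<^sub>E I A"
  shows "(\<Sum>w\<in>Pi\<^sub>E I A. K ^ card {i\<in>I. v i = w i}) = (\<Prod>i\<in>I. K + of_nat (card (A i)) - 1)"
proof -
  have "K ^ card {i\<in>I. v i = w i} = (\<Prod>i\<in>I. if v i = w i then K else 1)" for w
    by (simp add: prod.inter_filter[OF I, symmetric])
  then have "(\<Sum>w\<in>Pi\<^sub>E I A. K ^ card {i\<in>I. v i = w i})
      = (\<Prod>i\<in>I. \<Sum>y\<in>A i. if v i = y then K else 1)"
    using I A by (simp add: prod_sum_PiE)
  also have "\<dots> = (\<Prod>i\<in>I. K + of_nat (card (A i)) - 1)"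
  proof (intro prod.cong refl)
    fix i assume i: "i \<in> I"
    then have vi: "v i \<in> A i" using v by auto
    have "(\<Sum>y\<in>A i. if v i = y then K else 1) = K + (\<Sum>y\<in>A i - {v i}. if v i = y then K else 1)"
      using A[OF i] vi by (simp add: sum.remove)
    also have "(\<Sum>y\<in>A i - {v i}. if v i = y then K else 1) = (\<Sum>y\<in>A i - {v i}. 1)"
      by (rule sum.cong) auto
    also have "\<dots> = of_nat (card (A i - {v i}))"
      by simp
    also have "of_nat (card (A i - {v i})) = of_nat (card (A i)) - (1::'c)"
    proof -
      have "0 < card (A i)" using A[OF i] vi by (auto simp: card_gt_0_iff)
      then show ?thesis using A[OF i] vi by (simp add: of_nat_diff Suc_le_eq)
    qed
    finally show "(\<Sum>y\<in>A i. if v i = y then K else 1) = K + of_nat (card (A i)) - 1"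
      by (simp add: algebra_simps)
  qed
  finally show ?thesis .
qed

lemma second_moment_ratio_le:
  fixes p q s \<epsilon> :: real
  assumes "p < 1" "0 < q" "1 \<le> s"
    and "real (m * m) * p \<le> \<epsilon>" "real m / (s * q) \<le> \<epsilon>" "\<epsilon> \<le> 1/4"
  shows "((1 / q + s - 1) / s) ^ m / (1 - p) ^ (m * m) \<le> 1 + 4 * \<epsilon>"
proof -
  define x where "x = real m / (s * q)"
  have x: "0 \<le> x" "x \<le> \<epsilon>"
    using assms(2,3,5) by (auto simp: x_def)
  have "((1 / q + s - 1) / s) ^ m \<le> exp (1 / (s * q)) ^ m"
  proof (intro power_mono)
    have "(1 / q + s - 1) / s \<le> 1 + 1 / (s * q)" using assms(2,3) by (simp add: field_simps)
    then show "(1 / q + s - 1) / s \<le> exp (1 / (s * q))"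
      using exp_ge_add_one_self[of "1 / (s * q)"] by linarith
    have "0 < 1 / q" using assms(2) by simp
    then show "0 \<le> (1 / q + s - 1) / s" using assms(3) by (intro divide_nonneg_nonneg) linarith+
  qed
  also have "\<dots> = exp x" by (simp add: x_def exp_of_nat_mult[symmetric])
  also have "\<dots> \<le> 1 + 2 * x"
    using exp_bound_lemma[of x] x assms(6) by simp
  finally have numerator: "((1 / q + s - 1) / s) ^ m \<le> 1 + 2 * \<epsilon>" using x by linarith
  have "1 - \<epsilon> \<le> 1 + real (m * m) * - p" using assms(4) by simp
  also have "\<dots> \<le> (1 + - p) ^ (m * m)" using assms(1) by (intro Bernoulli_inequality) simp
  finally have denominator: "1 - \<epsilon> \<le> (1 - p) ^ (m * m)" by simp
  have "((1 / q + s - 1) / s) ^ m / (1 - p) ^ (m * m) \<le> (1 + 2 * \<epsilon>) / (1 - \<epsilon>)"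
    using numerator denominator x assms(6) by (intro frac_le) auto
  also have "\<dots> \<le> 1 + 4 * \<epsilon>"
  proof -
    have "\<epsilon> * \<epsilon> \<le> \<epsilon> * (1/4)" using x assms(6) by (intro mult_left_mono) auto
    then have "1 + 2 * \<epsilon> \<le> (1 + 4 * \<epsilon>) * (1 - \<epsilon>)" by (simp add: algebra_simps)
    then show ?thesis using assms(6) by (simp add: pos_divide_le_eq)
  qed
  finally show ?thesis .
qed

lemma all_edgesE:
  assumes "e \<in> all_edges V"
  obtains i j where "e = {i, j}" "i \<noteq> j" "i \<in> V" "j \<in> V"
  using assms unfolding all_edges_def by (auto simp: card_2_iff)

lemma doubleton_in_all_edges: "i \<noteq> j \<Longrightarrow> i \<in> V \<Longrightarrow> j \<in> V \<Longrightarrow> {i, j} \<in> all_edges V"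
  unfolding all_edges_def by auto

lemma all_edges_mono: "A \<subseteq> B \<Longrightarrow> all_edges A \<subseteq> all_edges B"
  unfolding all_edges_def by auto

lemma ball_all_edges_iff: "(\<forall>e\<in>all_edges V. P e) \<longleftrightarrow> (\<forall>i\<in>V. \<forall>j\<in>V. i \<noteq> j \<longrightarrow> P {i, j})"
  by (blast elim: all_edgesE intro: doubleton_in_all_edges)

lemma finite_all_edges: "finite V \<Longrightarrow> finite (all_edges V)"
  unfolding all_edges_def by auto

lemma card_all_edges_le:
  assumes "finite V"
  shows "card (all_edges V) \<le> card V * card V"
proof -
  have "all_edges V \<subseteq> (\<lambda>(i, j). {i, j}) ` (V \<times> V)"
    by (auto elim!: all_edgesE)
  then have "card (all_edges V) \<le> card ((\<lambda>(i, j). {i, j}) ` (V \<times> V))"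
    using assms by (intro card_mono) auto
  also have "\<dots> \<le> card (V \<times> V)"
    by (rule card_image_le) (use assms in simp)
  finally show ?thesis by (simp add: card_cartesian_product)
qed

lemma balanced_card_induced_edges_le:
  assumes "is_graph_on V E" "balanced V E" "A \<subseteq> V" "finite A"
  shows "real (card (induced_edges E A)) \<le> avg_degree V E * card A / 2"
proof (cases "A = {}")
  case True
  then have "induced_edges E A = {}"
    using assms(1) by (auto simp: induced_edges_def is_graph_on_def all_edges_def)
  then show ?thesis using True by simp
next
  case False
  then have "0 < real (card A)" using assms(4) by auto
  moreover have "avg_degree A (induced_edges E A) \<le> avg_degree V E"
    using False assms(2,3) by (auto simp: balanced_def)
  ultimately have "2 * real (card (induced_edges E A)) \<le> avg_degree V E * card A"
    by (simp add: avg_degree_def[of A] pos_divide_le_eq)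
  then show ?thesis by simp
qed

lemma finite_set_pmf_gnp: "finite (set_pmf (gnp n p))"
proof -
  have "set_pmf (gnp n p) \<subseteq> Pow (all_edges {1..n})"
    by (auto simp: gnp_def)
  then show ?thesis
    using finite_all_edges[of "{1..n}"] by (auto intro: finite_subset)
qed

definition part_index :: "nat \<Rightarrow> nat \<Rightarrow> nat" where
  "part_index s x = (x - 1) div s + 1"

lemma part_index_part:
  assumes "0 < n div m" "1 \<le> i" "x \<in> part n m i"
  shows "part_index (n div m) x = i"
proof -
  have "(x - 1) div (n div m) = i - 1"
    using assms by (intro div_nat_eqI) (auto simp: part_def mult.commute)
  then show ?thesis using assms(2) by (simp add: part_index_def)
qed

lemma card_part: "1 \<le> i \<Longrightarrow> card (part n m i) = n div m"
  by (cases i) (auto simp: part_def)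

lemma part_subset: "i \<le> m \<Longrightarrow> part n m i \<subseteq> {1..n}"
proof -
  assume "i \<le> m"
  then have "i * (n div m) \<le> m * (n div m)" by simp
  also have "\<dots> \<le> n" by simp
  finally show ?thesis by (auto simp: part_def)
qed

locale partite_copies =
  fixes n m :: nat and H :: "nat set set" and p :: real
  assumes m_pos: "0 < m" and m_le_n: "m \<le> n"
    and graph_H: "is_graph_on {1..m} H" and balanced_H: "balanced {1..m} H"
    and p_pos: "0 < p" and p_less_1: "p < 1"
begin

abbreviation s :: nat where
  "s \<equiv> n div m"

lemma s_pos: "0 < s"
  using m_pos m_le_n by (simp add: div_greater_zero_iff)

definition partite_maps :: "(nat \<Rightarrow> nat) set" where
  "partite_maps = Pi\<^sub>E {1..m} (part n m)"

definition is_copy :: "(nat \<Rightarrow> nat) \<Rightarrow> nat set set \<Rightarrow> bool" where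
  "is_copy v G \<longleftrightarrow> (\<forall>i\<in>{1..m}. \<forall>j\<in>{1..m}. i \<noteq> j \<longrightarrow> ({i, j} \<in> H \<longleftrightarrow> {v i, v j} \<in> G))"

definition copy_pairs :: "(nat \<Rightarrow> nat) \<Rightarrow> nat set set" where
  "copy_pairs v = (\<lambda>e. v ` e) ` all_edges {1..m}"

definition pattern_edge :: "nat set \<Rightarrow> bool" where
  "pattern_edge e \<longleftrightarrow> part_index s ` e \<in> H"

definition pattern_prob :: "nat set \<Rightarrow> real" where
  "pattern_prob A = (\<Prod>e\<in>all_edges A. if e \<in> H then p else 1 - p)"

definition q :: real where
  "q = p powr (avg_degree {1..m} H / 2)"

lemma q_pos: "0 < q"
  using p_pos by (simp add: q_def)

lemma partite_map_in_part: "v \<in> partite_maps \<Longrightarrow> i \<in> {1..m} \<Longrightarrow> v i \<in> part n m i"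
  by (auto simp: partite_maps_def)

lemma part_index_partite_map:
  "v \<in> partite_maps \<Longrightarrow> i \<in> {1..m} \<Longrightarrow> part_index s (v i) = i"
  using s_pos partite_map_in_part by (intro part_index_part) auto

lemma partite_map_range:
  assumes "v \<in> partite_maps" "i \<in> {1..m}"
  shows "v i \<in> {1..n}"
  using partite_map_in_part[OF assms] part_subset[of i m n] assms(2) by auto

lemma part_index_image:
  assumes "v \<in> partite_maps" "e \<subseteq> {1..m}"
  shows "part_index s ` v ` e = e"
proof -
  have "part_index s ` v ` e = (\<lambda>i. part_index s (v i)) ` e" by (simp add: image_image)
  also have "\<dots> = (\<lambda>i. i) ` e"
    using assms part_index_partite_map by (intro image_cong) auto
  finally show ?thesis by simp
qed

lemma inj_on_partite_map: "v \<in> partite_maps \<Longrightarrow> inj_on v {1..m}"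
  by (metis inj_onI part_index_partite_map)

lemma finite_partite_maps: "finite partite_maps"
  by (auto simp: partite_maps_def part_def intro!: finite_PiE)

lemma card_partite_maps: "card partite_maps = s ^ m"
  by (simp add: partite_maps_def card_PiE card_part)

text \<open>A partite map is determined by its image, since v i is the element of the image lying in part i.\<close>
lemma inj_on_image_partite_maps: "inj_on (\<lambda>v. v ` {1..m}) partite_maps"
proof (rule inj_onI)
  fix v w assume v: "v \<in> partite_maps" and w: "w \<in> partite_maps"
    and eq: "v ` {1..m} = w ` {1..m}"
  have "v i = w i" if i: "i \<in> {1..m}" for i
  proof -
    obtain j where j: "j \<in> {1..m}" "v i = w j" using i eq by blast
    then have "i = j"
      using part_index_partite_map[OF v i] part_index_partite_map[OF w j(1)] by simp
    then show ?thesis using j by simp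
  qed
  then show "v = w"
    using v w by (intro PiE_ext[of v "{1..m}" "part n m"]) (auto simp: partite_maps_def)
qed

lemma XH_eq_card_copies: "XH n m H G = card {v\<in>partite_maps. is_copy v G}"
proof -
  have "{S. \<exists>v \<in> Pi\<^sub>E {1..m} (part n m). S = v ` {1..m} \<and> inj_on v {1..m} \<and>
          (\<forall>i\<in>{1..m}. \<forall>j\<in>{1..m}. i \<noteq> j \<longrightarrow> ({i, j} \<in> H \<longleftrightarrow> {v i, v j} \<in> G))}
      = (\<lambda>v. v ` {1..m}) ` {v\<in>partite_maps. is_copy v G}"
    using inj_on_partite_map by (auto simp: partite_maps_def is_copy_def)
  moreover have "inj_on (\<lambda>v. v ` {1..m}) {v\<in>partite_maps. is_copy v G}"
    using inj_on_image_partite_maps by (rule inj_on_subset) auto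
  ultimately show ?thesis by (simp add: XH_def card_image)
qed

lemma copy_pairs_subset:
  assumes "v \<in> partite_maps"
  shows "copy_pairs v \<subseteq> all_edges {1..n}"
proof
  fix x assume "x \<in> copy_pairs v"
  then obtain i j where "x = {v i, v j}" "i \<noteq> j" "i \<in> {1..m}" "j \<in> {1..m}"
    by (auto simp: copy_pairs_def elim!: all_edgesE)
  then show "x \<in> all_edges {1..n}"
    using assms inj_on_partite_map[OF assms] partite_map_range
    by (auto intro!: doubleton_in_all_edges dest: inj_onD)
qed

lemma finite_copy_pairs: "finite (copy_pairs v)"
  by (simp add: copy_pairs_def finite_all_edges)

lemma pattern_edge_copy:
  "v \<in> partite_maps \<Longrightarrow> e \<subseteq> {1..m} \<Longrightarrow> pattern_edge (v ` e) \<longleftrightarrow> e \<in> H"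
  by (simp add: pattern_edge_def part_index_image)

lemma is_copy_iff:
  assumes "v \<in> partite_maps"
  shows "is_copy v G \<longleftrightarrow> (\<forall>e\<in>copy_pairs v. e \<in> G \<longleftrightarrow> pattern_edge e)"
proof -
  have "is_copy v G \<longleftrightarrow> (\<forall>e\<in>all_edges {1..m}. e \<in> H \<longleftrightarrow> v ` e \<in> G)"
    by (simp add: is_copy_def ball_all_edges_iff)
  also have "\<dots> \<longleftrightarrow> (\<forall>e\<in>all_edges {1..m}. v ` e \<in> G \<longleftrightarrow> pattern_edge (v ` e))"
    using assms by (auto simp: pattern_edge_copy all_edges_def)
  finally show ?thesis by (simp add: copy_pairs_def)
qed

abbreviation edge_prob :: "nat set \<Rightarrow> real" where
  "edge_prob e \<equiv> pmf (bernoulli_pmf p) (pattern_edge e)"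

lemma edge_prob_pos: "0 < edge_prob e"
  using p_pos p_less_1 by (cases "pattern_edge e") auto

lemma edge_prob_le_1: "edge_prob e \<le> 1"
  by (rule pmf_le_1)

lemma prob_copies:
  assumes "finite V" "V \<subseteq> partite_maps"
  shows "measure_pmf.prob (gnp n p) {G. \<forall>v\<in>V. is_copy v G} = (\<Prod>e\<in>\<Union>(copy_pairs ` V). edge_prob e)"
proof -
  let ?E = "all_edges {1..n}"
  have "measure_pmf.prob (gnp n p) {G. \<forall>v\<in>V. is_copy v G}
      = measure_pmf.prob (Pi_pmf ?E False (\<lambda>_. bernoulli_pmf p)) {f. \<forall>v\<in>V. is_copy v {e\<in>?E. f e}}"
    by (simp add: gnp_def vimage_def)
  also have "{f. \<forall>v\<in>V. is_copy v {e\<in>?E. f e}} = {f. \<forall>e\<in>\<Union>(copy_pairs ` V). f e = pattern_edge e}"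
    using assms(2) copy_pairs_subset by (auto simp: is_copy_iff subset_iff) blast+
  also have "measure_pmf.prob (Pi_pmf ?E False (\<lambda>_. bernoulli_pmf p)) \<dots> = (\<Prod>e\<in>\<Union>(copy_pairs ` V). edge_prob e)"
    using assms(2) copy_pairs_subset by (intro measure_Pi_pmf_agree finite_all_edges) auto
  finally show ?thesis .
qed

lemma prod_edge_prob_image:
  assumes "v \<in> partite_maps" "A \<subseteq> {1..m}"
  shows "(\<Prod>e\<in>(\<lambda>e. v ` e) ` all_edges A. edge_prob e) = pattern_prob A"
proof -
  have "inj_on (\<lambda>e. v ` e) (all_edges A)"
    by (rule inj_on_subset[OF inj_on_image_Pow[OF inj_on_partite_map[OF assms(1)]]])
      (use assms(2) in \<open>auto simp: all_edges_def\<close>)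
  then have "(\<Prod>e\<in>(\<lambda>e. v ` e) ` all_edges A. edge_prob e) = (\<Prod>e\<in>all_edges A. edge_prob (v ` e))"
    by (simp add: prod.reindex)
  also have "\<dots> = pattern_prob A"
    unfolding pattern_prob_def using assms p_pos p_less_1
    by (intro prod.cong) (auto simp: pattern_edge_copy all_edges_def)
  finally show ?thesis .
qed

lemma copy_pairs_inter_subset:
  assumes v: "v \<in> partite_maps" and w: "w \<in> partite_maps"
  shows "copy_pairs v \<inter> copy_pairs w \<subseteq> (\<lambda>e. v ` e) ` all_edges {i\<in>{1..m}. v i = w i}"
proof
  fix x assume "x \<in> copy_pairs v \<inter> copy_pairs w"
  then obtain e e' where e: "e \<in> all_edges {1..m}" "x = v ` e" and e': "e' \<in> all_edges {1..m}" "x = w ` e'"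
    by (auto simp: copy_pairs_def)
  have "e = e'"
    using part_index_image[OF v, of e] part_index_image[OF w, of e'] e e' by (simp add: all_edges_def)
  obtain i j where ij: "e = {i, j}" "i \<noteq> j" "i \<in> {1..m}" "j \<in> {1..m}"
    using e(1) by (rule all_edgesE)
  have "v i \<noteq> w j"
    using part_index_partite_map[OF v ij(3)] part_index_partite_map[OF w ij(4)] ij(2) by metis
  moreover have "{v i, v j} = {w i, w j}" using e(2) e'(2) \<open>e = e'\<close> ij(1) by (metis image_empty image_insert)
  ultimately have "v i = w i \<and> v j = w j" by (auto simp: doubleton_eq_iff)
  then have "e \<in> all_edges {i\<in>{1..m}. v i = w i}"
    using ij by (auto intro!: doubleton_in_all_edges)
  then show "x \<in> (\<lambda>e. v ` e) ` all_edges {i\<in>{1..m}. v i = w i}"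
    using e(2) by blast
qed

lemma pattern_prob_ge:
  assumes "A \<subseteq> {1..m}"
  shows "q ^ card A * (1 - p) ^ (m * m) \<le> pattern_prob A"
proof -
  have fin: "finite (all_edges A)" using assms by (intro finite_all_edges) (auto intro: finite_subset)
  define k where "k = card (all_edges A \<inter> H)"
  define l where "l = card (all_edges A - H)"
  have "pattern_prob A = p ^ k * (1 - p) ^ l"
    unfolding pattern_prob_def k_def l_def using fin by (simp add: prod.If_cases Diff_eq)
  have "all_edges A \<inter> H = induced_edges H A"
    using graph_H assms by (auto simp: induced_edges_def is_graph_on_def all_edges_def)
  then have "real k \<le> avg_degree {1..m} H * card A / 2"
    unfolding k_def using finite_subset[OF assms]
    by (metis balanced_card_induced_edges_le[OF graph_H balanced_H assms] finite_atLeastAtMost)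
  then have "q ^ card A \<le> p ^ k"
    using p_pos p_less_1
    by (simp add: q_def powr_realpow[symmetric] powr_powr mult.commute powr_mono')
  have "l \<le> card (all_edges {1..m})"
    unfolding l_def using assms by (intro card_mono finite_all_edges) (auto dest: all_edges_mono)
  also have "\<dots> \<le> m * m" using card_all_edges_le[of "{1..m}"] by simp
  finally have "(1 - p) ^ (m * m) \<le> (1 - p) ^ l"
    using p_pos p_less_1 by (intro power_decreasing) auto
  show ?thesis
    using \<open>q ^ card A \<le> p ^ k\<close> \<open>(1 - p) ^ (m * m) \<le> (1 - p) ^ l\<close> \<open>pattern_prob A = _\<close> p_pos p_less_1
    by (auto intro!: mult_mono)
qed

lemma prod_edge_prob_copy_pairs:
  "v \<in> partite_maps \<Longrightarrow> (\<Prod>e\<in>copy_pairs v. edge_prob e) = pattern_prob {1..m}"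
  unfolding copy_pairs_def by (rule prod_edge_prob_image) auto

lemma prob_is_copy: "v \<in> partite_maps \<Longrightarrow> measure_pmf.prob (gnp n p) {G. is_copy v G} = pattern_prob {1..m}"
  using prob_copies[of "{v}"] prod_edge_prob_copy_pairs[of v] by simp

lemma pattern_prob_pos: "0 < pattern_prob {1..m}"
proof -
  have "0 < q ^ m * (1 - p) ^ (m * m)" using q_pos p_less_1 by simp
  then show ?thesis using pattern_prob_ge[of "{1..m}"] by simp
qed

text \<open>Two copies agreeing on A share only pairs inside the image of A, so their joint probability
  exceeds the product of the marginals by at most the inverse of the pattern probability of A.\<close>
lemma prob_two_copies_le:
  assumes v: "v \<in> partite_maps" and w: "w \<in> partite_maps"
  shows "measure_pmf.prob (gnp n p) {G. is_copy v G \<and> is_copy w G}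
    \<le> (pattern_prob {1..m})\<^sup>2 * (1 / q) ^ card {i\<in>{1..m}. v i = w i} / (1 - p) ^ (m * m)"
proof -
  define A where "A = {i\<in>{1..m}. v i = w i}"
  define U where "U = (\<Prod>e\<in>copy_pairs v \<union> copy_pairs w. edge_prob e)"
  define I where "I = (\<Prod>e\<in>copy_pairs v \<inter> copy_pairs w. edge_prob e)"
  define lb where "lb = q ^ card A * (1 - p) ^ (m * m)"
  have "U * I = (pattern_prob {1..m})\<^sup>2"
    unfolding U_def I_def power2_eq_square
    using prod.union_inter[OF finite_copy_pairs finite_copy_pairs, of edge_prob v w]
    by (simp add: prod_edge_prob_copy_pairs v w)
  have "lb \<le> pattern_prob A"
    unfolding lb_def by (rule pattern_prob_ge) (auto simp: A_def)
  also have "\<dots> = (\<Prod>e\<in>(\<lambda>e. v ` e) ` all_edges A. edge_prob e)"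
    by (rule prod_edge_prob_image[symmetric]) (auto simp: A_def v)
  also have "\<dots> \<le> I"
    unfolding I_def A_def using copy_pairs_inter_subset[OF v w] edge_prob_pos edge_prob_le_1
    by (intro prod_superset_le finite_imageI finite_all_edges) (auto intro: less_imp_le)
  finally have "lb \<le> I" .
  moreover have "0 \<le> U" unfolding U_def using edge_prob_pos by (simp add: prod_nonneg less_imp_le)
  ultimately have "U * lb \<le> (pattern_prob {1..m})\<^sup>2"
    using \<open>U * I = _\<close> by (metis mult_left_mono)
  moreover have "0 < lb" unfolding lb_def using q_pos p_less_1 by simp
  ultimately have "U \<le> (pattern_prob {1..m})\<^sup>2 / lb" by (simp add: pos_le_divide_eq)
  also have "\<dots> = (pattern_prob {1..m})\<^sup>2 * (1 / q) ^ card A / (1 - p) ^ (m * m)"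
    by (simp add: lb_def power_one_over field_simps)
  finally show ?thesis
    using prob_copies[of "{v, w}"] v w by (simp add: U_def A_def)
qed

lemma XH_eq_sum: "real (XH n m H G) = (\<Sum>v\<in>partite_maps. indicator {G. is_copy v G} G)"
proof -
  have "real (XH n m H G) = (\<Sum>v\<in>{v\<in>partite_maps. is_copy v G}. 1)"
    by (simp add: XH_eq_card_copies)
  also have "\<dots> = (\<Sum>v\<in>partite_maps. if is_copy v G then 1 else 0)"
    by (rule sum.inter_filter[OF finite_partite_maps])
  finally show ?thesis by (simp add: indicator_def of_bool_def)
qed

lemma expectation_XH:
  "measure_pmf.expectation (gnp n p) (\<lambda>G. real (XH n m H G)) = real s ^ m * pattern_prob {1..m}"
  by (simp add: XH_eq_sum integrable_measure_pmf_finite[OF finite_set_pmf_gnp]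
      prob_is_copy card_partite_maps)

lemma second_moment_XH:
  "measure_pmf.expectation (gnp n p) (\<lambda>G. real (XH n m H G) ^ 2)
   = (\<Sum>v\<in>partite_maps. \<Sum>w\<in>partite_maps. measure_pmf.prob (gnp n p) {G. is_copy v G \<and> is_copy w G})"
proof -
  have "real (XH n m H G) ^ 2
      = (\<Sum>v\<in>partite_maps. \<Sum>w\<in>partite_maps. indicator {G. is_copy v G \<and> is_copy w G} G)" for G
    by (simp add: XH_eq_sum power2_eq_square sum_product indicator_inter_arith[symmetric] Collect_conj_eq)
  then show ?thesis
    by (simp add: integrable_measure_pmf_finite[OF finite_set_pmf_gnp])
qed

lemma second_moment_XH_le:
  "measure_pmf.expectation (gnp n p) (\<lambda>G. real (XH n m H G) ^ 2)
   \<le> ((1 / q + s - 1) / s) ^ m / (1 - p) ^ (m * m)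
     * (measure_pmf.expectation (gnp n p) (\<lambda>G. real (XH n m H G)))\<^sup>2"
proof -
  have agree: "(\<Sum>w\<in>partite_maps. (1 / q) ^ card {i\<in>{1..m}. v i = w i}) = (1 / q + s - 1) ^ m"
    if "v \<in> partite_maps" for v
  proof -
    have "(\<Sum>w\<in>partite_maps. (1 / q) ^ card {i\<in>{1..m}. v i = w i})
        = (\<Prod>i\<in>{1..m}. 1 / q + real (card (part n m i)) - 1)"
      unfolding partite_maps_def
      by (rule sum_PiE_power_card_agree) (use that in \<open>auto simp: partite_maps_def part_def\<close>)
    also have "\<dots> = (\<Prod>i\<in>{1..m}. 1 / q + real s - 1)"
      by (intro prod.cong refl) (simp add: card_part)
    finally show ?thesis by simp
  qed
  have "measure_pmf.expectation (gnp n p) (\<lambda>G. real (XH n m H G) ^ 2)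
      \<le> (\<Sum>v\<in>partite_maps. \<Sum>w\<in>partite_maps.
            (pattern_prob {1..m})\<^sup>2 * (1 / q) ^ card {i\<in>{1..m}. v i = w i} / (1 - p) ^ (m * m))"
    unfolding second_moment_XH by (intro sum_mono prob_two_copies_le)
  also have "\<dots> = (\<Sum>v\<in>partite_maps. (pattern_prob {1..m})\<^sup>2
      * (\<Sum>w\<in>partite_maps. (1 / q) ^ card {i\<in>{1..m}. v i = w i}) / (1 - p) ^ (m * m))"
    by (simp add: sum_distrib_left sum_divide_distrib)
  also have "\<dots> = (\<Sum>v\<in>partite_maps. (pattern_prob {1..m})\<^sup>2 * (1 / q + s - 1) ^ m / (1 - p) ^ (m * m))"
    by (intro sum.cong refl) (simp only: agree)
  also have "\<dots> = real s ^ m * ((pattern_prob {1..m})\<^sup>2 * (1 / q + s - 1) ^ m / (1 - p) ^ (m * m))"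
    by (simp add: card_partite_maps)
  also have "\<dots> = ((1 / q + s - 1) / s) ^ m / (1 - p) ^ (m * m) * (real s ^ m * pattern_prob {1..m})\<^sup>2"
    using s_pos by (simp add: power_divide power_mult_distrib power2_eq_square field_simps)
  finally show ?thesis by (simp only: expectation_XH)
qed

lemma expectation_XH_ge:
  assumes "real (m * m) * p \<le> 1/2" "1 \<le> real s * q"
  shows "real s * q / 2 \<le> measure_pmf.expectation (gnp n p) (\<lambda>G. real (XH n m H G))"
proof -
  have "1/2 \<le> 1 + real (m * m) * - p" using assms(1) by simp
  also have "\<dots> \<le> (1 + - p) ^ (m * m)" using p_less_1 by (intro Bernoulli_inequality) simp
  finally have half: "1/2 \<le> (1 - p) ^ (m * m)" by simp
  have "real s * q \<le> (real s * q) ^ m"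
    using assms(2) m_pos power_increasing[of 1 m "real s * q"] by simp
  then have "real s * q * (1/2) \<le> (real s * q) ^ m * (1 - p) ^ (m * m)"
    using half assms(2) by (intro mult_mono) auto
  also have "\<dots> = real s ^ m * (q ^ m * (1 - p) ^ (m * m))"
    by (simp add: power_mult_distrib)
  also have "\<dots> \<le> real s ^ m * pattern_prob {1..m}"
    using pattern_prob_ge[of "{1..m}"] by (intro mult_left_mono) auto
  finally show ?thesis by (simp add: expectation_XH)
qed

lemma XH_lower_tail:
  assumes "real (m * m) * p \<le> \<epsilon>" "real m / (real s * q) \<le> \<epsilon>" "\<epsilon> \<le> 1/4"
    and "0 \<le> \<beta>" "\<beta> < 1"
  shows "measure_pmf.prob (gnp n p)
      {G. real (XH n m H G) \<le> \<beta> * measure_pmf.expectation (gnp n p) (\<lambda>G. real (XH n m H G))}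
    \<le> 4 * \<epsilon> / (1 - \<beta>)\<^sup>2"
proof -
  have "((1 / q + s - 1) / s) ^ m / (1 - p) ^ (m * m) \<le> 1 + 4 * \<epsilon>"
    using assms(1-3) p_less_1 q_pos s_pos by (intro second_moment_ratio_le) auto
  then have "measure_pmf.expectation (gnp n p) (\<lambda>G. real (XH n m H G) ^ 2)
      \<le> (1 + 4 * \<epsilon>) * (measure_pmf.expectation (gnp n p) (\<lambda>G. real (XH n m H G)))\<^sup>2"
    using second_moment_XH_le by (meson order_trans mult_right_mono zero_le_power2)
  moreover have "0 < measure_pmf.expectation (gnp n p) (\<lambda>G. real (XH n m H G))"
    using s_pos pattern_prob_pos by (simp add: expectation_XH)
  ultimately show ?thesis
    using measure_pmf.prob_le_fraction_of_expectation[where M = "gnp n p" and X = "\<lambda>G. real (XH n m H G)"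
        and R = "1 + 4 * \<epsilon>" and \<beta> = \<beta>]
      assms(4,5) by (simp add: integrable_measure_pmf_finite[OF finite_set_pmf_gnp])
qed

end

lemma eventually_powr_less:
  fixes a c :: real
  assumes "a < 0" "0 < c"
  shows "\<forall>\<^sub>F n in sequentially. real n powr a < c"
  using tendsto_neg_powr[OF assms(1) filterlim_real_sequentially] assms(2) by (rule order_tendstoD)

lemma floor_powr_bounds:
  assumes "1 \<le> n" "0 \<le> \<rho>" "\<rho> \<le> 1" "m = nat \<lfloor>real n powr \<rho>\<rfloor>"
  shows "0 < m" "m \<le> n" "real m \<le> real n powr \<rho>"
proof -
  have "1 \<le> real n powr \<rho>" using assms(1,2) by (intro ge_one_powr_ge_zero) auto
  then show "0 < m" "real m \<le> real n powr \<rho>"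
    using assms(4) le_nat_floor[of 1 "real n powr \<rho>"] by auto
  have "real n powr \<rho> \<le> real n powr 1" using assms(1,3) by (intro powr_mono) auto
  then show "m \<le> n" using \<open>real m \<le> real n powr \<rho>\<close> assms(1) by simp
qed

lemma div_ge_powr:
  assumes "m dvd n" "0 < m" "0 < n" "real m \<le> real n powr \<rho>"
  shows "real n powr (1 - \<rho>) \<le> real (n div m)"
proof -
  have "real n powr (1 - \<rho>) = real n / real n powr \<rho>" using assms(3) by (simp add: powr_diff)
  also have "\<dots> \<le> real n / real m"
    using assms(2-4) by (intro divide_left_mono mult_pos_pos) auto
  also have "\<dots> = real (n div m)" using assms(1) by (simp add: real_of_nat_div)
  finally show ?thesis .
qed

definition sparse_regime :: "real \<Rightarrow> real \<Rightarrow> real \<Rightarrow> nat \<Rightarrow> nat \<Rightarrow> bool" where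
  "sparse_regime \<delta> \<alpha> c n m \<longleftrightarrow> 0 < m \<and> m \<le> n \<and> real n powr (\<delta> - 1) < 1 \<and>
     real (m * m) * real n powr (\<delta> - 1) \<le> c \<and>
     real m / (real (n div m) * (real n powr (\<delta> - 1)) powr (\<alpha> / 2)) \<le> c \<and>
     1 / c \<le> real (n div m) * (real n powr (\<delta> - 1)) powr (\<alpha> / 2)"

lemma sparse_regime_if_powr_less:
  fixes \<delta> \<rho> \<alpha> \<gamma> c :: real
  assumes "0 < \<delta>" "0 < \<rho>" "2 * \<rho> + \<delta> < 1" "0 < c"
    and \<gamma>: "\<gamma> = 1 - \<rho> + (\<delta> - 1) * (\<alpha> / 2)"
    and n: "2 \<le> n" "real n powr (\<rho> + \<rho> + (\<delta> - 1)) < c" "real n powr (\<rho> - \<gamma>) < c"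
      "real n powr (- \<gamma>) < c"
    and m: "m = nat \<lfloor>real n powr \<rho>\<rfloor>" "m dvd n"
  shows "sparse_regime \<delta> \<alpha> c n m"
proof -
  let ?x = "real n"
  let ?q = "(?x powr (\<delta> - 1)) powr (\<alpha> / 2)"
  have x: "1 < ?x" using n by simp
  have m_pos: "0 < m" and m_le: "m \<le> n" and m_powr: "real m \<le> ?x powr \<rho>"
    using floor_powr_bounds[OF _ _ _ m(1)] n assms(1-3) by auto
  have "?x powr \<gamma> = ?x powr (1 - \<rho>) * ?q"
    by (simp add: \<gamma> powr_add powr_powr)
  also have "\<dots> \<le> real (n div m) * ?q"
    using div_ge_powr[OF m(2) m_pos _ m_powr] x by (intro mult_right_mono) auto
  finally have sq: "?x powr \<gamma> \<le> real (n div m) * ?q" .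
  have "real m * real m \<le> ?x powr \<rho> * ?x powr \<rho>"
    using m_powr by (intro mult_mono) auto
  then have "real (m * m) * ?x powr (\<delta> - 1) \<le> ?x powr \<rho> * ?x powr \<rho> * ?x powr (\<delta> - 1)"
    by (simp add: mult_right_mono)
  also have "\<dots> = ?x powr (\<rho> + \<rho> + (\<delta> - 1))" by (simp only: powr_add)
  finally have edges: "real (m * m) * ?x powr (\<delta> - 1) \<le> c" using n by simp
  have "real m / (real (n div m) * ?q) \<le> ?x powr \<rho> / ?x powr \<gamma>"
    using m_powr sq x by (intro frac_le) auto
  also have "\<dots> = ?x powr (\<rho> - \<gamma>)" by (simp add: powr_diff)
  finally have overlap: "real m / (real (n div m) * ?q) \<le> c" using n by simp
  have "1 / ?x powr \<gamma> < c" using n x by (simp add: powr_minus divide_inverse)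
  then have "1 / c \<le> ?x powr \<gamma>" using x assms(4) by (simp add: field_simps)
  then have mean: "1 / c \<le> real (n div m) * ?q" using sq by linarith
  have "?x powr (\<delta> - 1) < 1" using x assms(2,3) by (intro powr_less_one) auto
  then show ?thesis
    unfolding sparse_regime_def using m_pos m_le edges overlap mean by blast
qed

lemma eventually_sparse_regime:
  fixes \<delta> \<rho> \<alpha> c :: real
  assumes "0 < \<delta>" "0 < \<rho>" "2 * \<rho> + \<delta> < 1" "4 * \<rho> + \<alpha> * (1 - \<delta>) < 2" "0 < c"
  shows "\<forall>\<^sub>F n in sequentially. \<forall>m. m = nat \<lfloor>real n powr \<rho>\<rfloor> \<longrightarrow> m dvd n \<longrightarrow> sparse_regime \<delta> \<alpha> c n m"
proof -
  define \<gamma> where "\<gamma> = 1 - \<rho> + (\<delta> - 1) * (\<alpha> / 2)"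
  have "(\<delta> - 1) * (\<alpha> / 2) = - (\<alpha> * (1 - \<delta>) / 2)" by (simp add: field_simps)
  then have "\<rho> - \<gamma> < 0" "- \<gamma> < 0" using assms(2,4) unfolding \<gamma>_def by linarith+
  then have "\<forall>\<^sub>F n in sequentially. 2 \<le> n \<and> real n powr (\<rho> + \<rho> + (\<delta> - 1)) < c \<and>
      real n powr (\<rho> - \<gamma>) < c \<and> real n powr (- \<gamma>) < c"
    using assms by (intro eventually_conj eventually_ge_at_top eventually_powr_less) auto
  then show ?thesis
    by (elim eventually_mono) (use assms \<gamma>_def sparse_regime_if_powr_less in blast)
qed

lemma sparse_regime_partite_copies:
  assumes "sparse_regime \<delta> \<alpha> c n m" "is_graph_on {1..m} H" "balanced {1..m} H"
  shows "partite_copies n m H (real n powr (\<delta> - 1))"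
  using assms by unfold_locales (auto simp: sparse_regime_def)

lemma sparse_regime_expectation_XH_ge:
  assumes regime: "sparse_regime \<delta> \<alpha> c n m" and c: "0 < c" "c \<le> 1/2"
    and H: "is_graph_on {1..m} H" "avg_degree {1..m} H = \<alpha>" "balanced {1..m} H"
  shows "1 / (2 * c) \<le> measure_pmf.expectation (gnp n (real n powr (\<delta> - 1))) (\<lambda>G. real (XH n m H G))"
proof -
  interpret partite_copies n m H "real n powr (\<delta> - 1)"
    using sparse_regime_partite_copies[OF regime H(1,3)] .
  have "q = (real n powr (\<delta> - 1)) powr (\<alpha> / 2)" unfolding q_def H(2) ..
  then have sq: "1 / c \<le> real s * q" and edges: "real (m * m) * real n powr (\<delta> - 1) \<le> c"
    using regime by (auto simp: sparse_regime_def)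
  have "2 \<le> 1 / c" using c by (simp add: field_simps)
  then have "real s * q / 2 \<le> measure_pmf.expectation (gnp n (real n powr (\<delta> - 1))) (\<lambda>G. real (XH n m H G))"
    using sq edges c by (intro expectation_XH_ge) auto
  then show ?thesis using sq by (simp add: field_simps)
qed

lemma sparse_regime_XH_lower_tail:
  assumes regime: "sparse_regime \<delta> \<alpha> \<epsilon> n m" and "\<epsilon> \<le> 1/4"
    and H: "is_graph_on {1..m} H" "avg_degree {1..m} H = \<alpha>" "balanced {1..m} H"
    and "0 \<le> \<beta>" "\<beta> < 1"
  shows "measure_pmf.prob (gnp n (real n powr (\<delta> - 1)))
      {G. real (XH n m H G) \<le> \<beta> * measure_pmf.expectation (gnp n (real n powr (\<delta> - 1))) (\<lambda>G. real (XH n m H G))}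
    \<le> 4 * \<epsilon> / (1 - \<beta>)\<^sup>2"
proof -
  interpret partite_copies n m H "real n powr (\<delta> - 1)"
    using sparse_regime_partite_copies[OF regime H(1,3)] .
  have "q = (real n powr (\<delta> - 1)) powr (\<alpha> / 2)" unfolding q_def H(2) ..
  then show ?thesis
    using regime assms by (intro XH_lower_tail) (auto simp: sparse_regime_def)
qed

lemma eventually_expectation_XH_ge:
  fixes \<delta> \<rho> \<alpha> M :: real
  assumes "0 < \<delta>" "0 < \<rho>" "2 * \<rho> + \<delta> < 1" "4 * \<rho> + \<alpha> * (1 - \<delta>) < 2"
  shows "\<forall>\<^sub>F n in sequentially. \<forall>m H. m = nat \<lfloor>real n powr \<rho>\<rfloor> \<longrightarrow> m dvd n \<longrightarrow>
    is_graph_on {1..m} H \<longrightarrow> avg_degree {1..m} H = \<alpha> \<longrightarrow> balanced {1..m} H \<longrightarrow>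
    M \<le> measure_pmf.expectation (gnp n (real n powr (\<delta> - 1))) (\<lambda>G. real (XH n m H G))"
proof -
  define c where "c = 1 / (2 * max M 1)"
  have c: "0 < c" "c \<le> 1/2" "M \<le> 1 / (2 * c)" by (auto simp: c_def)
  show ?thesis
    using eventually_sparse_regime[OF assms c(1)]
    by (elim eventually_mono) (use c sparse_regime_expectation_XH_ge in \<open>fastforce\<close>)
qed

lemma eventually_XH_lower_tail:
  fixes \<delta> \<rho> \<alpha> \<epsilon> :: real
  assumes "0 < \<delta>" "0 < \<rho>" "2 * \<rho> + \<delta> < 1" "4 * \<rho> + \<alpha> * (1 - \<delta>) < 2" "0 < \<epsilon>" "\<epsilon> \<le> 1/4"
  shows "\<forall>\<^sub>F n in sequentially. \<forall>m H. m = nat \<lfloor>real n powr \<rho>\<rfloor> \<longrightarrow> m dvd n \<longrightarrow>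
    is_graph_on {1..m} H \<longrightarrow> avg_degree {1..m} H = \<alpha> \<longrightarrow> balanced {1..m} H \<longrightarrow>
    (\<forall>\<beta>::real. 0 \<le> \<beta> \<longrightarrow> \<beta> < 1 \<longrightarrow>
      measure_pmf.prob (gnp n (real n powr (\<delta> - 1)))
        {G. real (XH n m H G) \<le> \<beta> * measure_pmf.expectation (gnp n (real n powr (\<delta> - 1)))
                                          (\<lambda>G. real (XH n m H G))}
      \<le> 4 * \<epsilon> / (1 - \<beta>)^2)"
  using eventually_sparse_regime[OF assms(1-5)]
  by (elim eventually_mono) (use assms(6) sparse_regime_XH_lower_tail in \<open>fastforce\<close>)

theorem corollaryC1:
  fixes \<delta> \<epsilon> \<alpha> \<rho> :: real
  assumes "0 < \<delta>" "\<delta> < 1"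
    and "0 < \<epsilon>" "\<epsilon> < 1/7"
    and "2 < \<alpha>" "\<alpha> < min (2 / (1 - \<delta>)) 3"
    and "0 < \<rho>" "\<rho> < min ((1 - \<delta>) / 2) ((2 - \<alpha> * (1 - \<delta>)) / 4)"
  shows
    "(\<forall>M::real. \<exists>N. \<forall>n\<ge>N. \<forall>m H.
        m = nat \<lfloor>real n powr \<rho>\<rfloor> \<longrightarrow> m dvd n \<longrightarrow>
        is_graph_on {1..m} H \<longrightarrow> avg_degree {1..m} H = \<alpha> \<longrightarrow> balanced {1..m} H \<longrightarrow>
        measure_pmf.expectation (gnp n (real n powr (\<delta> - 1))) (\<lambda>G. real (XH n m H G)) \<ge> M)
     \<and>
     (\<exists>N. \<forall>n\<ge>N. \<forall>m H.
        m = nat \<lfloor>real n powr \<rho>\<rfloor> \<longrightarrow> m dvd n \<longrightarrow>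
        is_graph_on {1..m} H \<longrightarrow> avg_degree {1..m} H = \<alpha> \<longrightarrow> balanced {1..m} H \<longrightarrow>
        (\<forall>\<beta>::real. 0 \<le> \<beta> \<longrightarrow> \<beta> < 1 \<longrightarrow>
           measure_pmf.prob (gnp n (real n powr (\<delta> - 1)))
             {G. real (XH n m H G) \<le> \<beta> * measure_pmf.expectation (gnp n (real n powr (\<delta> - 1)))
                                               (\<lambda>G. real (XH n m H G))}
           \<le> 4 * \<epsilon> / (1 - \<beta>)^2))"
proof -
  have \<rho>: "2 * \<rho> + \<delta> < 1" "4 * \<rho> + \<alpha> * (1 - \<delta>) < 2"
    using assms(8) by auto
  show ?thesis
    using eventually_expectation_XH_ge[OF assms(1,7) \<rho>]
      eventually_XH_lower_tail[OF assms(1,7) \<rho> assms(3)] assms(4)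
    unfolding eventually_sequentially by auto
qed

end
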